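(* Let $q\ge1$, $M>0$, $\alpha=2^{q+1}+8$, and let $\{J_i\}_{i=1}^m$ be an assignment satisfying $\mathbb{E}\big[(\sum_{i=1}^m(\sum_{j\in J_i}Y_j)^q)^{1/q}\big]\le M$. Then $\sum_{j=1}^n\mathbb{E}[(Y'_j)^q]\le\alpha M^q$.
   Context: Nonnegative random variables $X_{ij}$ (size of job $j$ on machine $i$), with $X_{ij}$ and $X_{i'j'}$ independent whenever $j\ne j'$. For an assignment $\{J_i\}$ (partition of $[n]$), $Y_j:=X_{ij}$ where $j\in J_i$ (so the $Y_j$ are independent). Truncated part $Y'_j:=Y_j\mathbf{1}[Y_j\le M]$. *)

theory Defs
  imports "HOL-Probability.Probability"
begin

text \<open>An assignment of jobs 1..n to machines 1..m: a partition of {1..n}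
  into sets J 1, ..., J m (some possibly empty).\<close>
definition is_assignment :: "nat \<Rightarrow> nat \<Rightarrow> (nat \<Rightarrow> nat set) \<Rightarrow> bool" where
  "is_assignment m n J \<longleftrightarrow>
     (\<forall>i\<in>{1..m}. J i \<subseteq> {1..n}) \<and>
     (\<forall>j\<in>{1..n}. \<exists>!i. i \<in> {1..m} \<and> j \<in> J i)"

definition machine_of :: "nat \<Rightarrow> (nat \<Rightarrow> nat set) \<Rightarrow> nat \<Rightarrow> nat" where
  "machine_of m J j = (THE i. i \<in> {1..m} \<and> j \<in> J i)"

definition Yv :: "(nat \<Rightarrow> nat \<Rightarrow> 'a \<Rightarrow> real) \<Rightarrow> nat \<Rightarrow> (nat \<Rightarrow> nat set) \<Rightarrow> nat \<Rightarrow> 'a \<Rightarrow> real" where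
  "Yv X m J j \<omega> = X (machine_of m J j) j \<omega>"

definition Ytr :: "(nat \<Rightarrow> nat \<Rightarrow> 'a \<Rightarrow> real) \<Rightarrow> nat \<Rightarrow> (nat \<Rightarrow> nat set) \<Rightarrow> real \<Rightarrow> nat \<Rightarrow> 'a \<Rightarrow> real" where
  "Ytr X m J M j \<omega> = (if Yv X m J j \<omega> \<le> M then Yv X m J j \<omega> else 0)"

end

theory Submission
  imports Defs
begin

(* Put Z_j = (Y'_j)^q: independent, with values in [0, B] for B = M^q. Since t |-> t^q is
   superadditive for q >= 1, (sum_j Z_j)^(1/q) is pointwise at most the l_q-norm of the
   machine loads, so E[(sum_j Z_j)^(1/q)] <= M = B^(1/q). For independent variables with
   values in [0, B] the variance of S = sum_j Z_j is at most B times its mean mu. If mu > 8B,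
   Chebyshev's inequality gives S >= mu/2 with probability at least 1/2, hence
   (mu/2)^(1/q) / 2 <= E[S^(1/q)] <= B^(1/q), i.e. mu <= 2^(q+1) B. *)

lemma sum_powr_le_powr_sum:
  fixes a :: "'i \<Rightarrow> real"
  assumes "finite A" and nonneg: "\<And>j. j \<in> A \<Longrightarrow> 0 \<le> a j" and "1 \<le> q"
  shows "(\<Sum>j\<in>A. a j powr q) \<le> (\<Sum>j\<in>A. a j) powr q"
proof -
  define S where "S = (\<Sum>j\<in>A. a j)"
  have "S \<ge> 0"
    unfolding S_def using nonneg by (simp add: sum_nonneg)
  have "a j powr q \<le> a j * S powr (q - 1)" if "j \<in> A" for j
  proof -
    have "a j \<le> S"
      unfolding S_def using \<open>finite A\<close> nonneg that by (intro member_le_sum) auto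
    then have "a j * a j powr (q - 1) \<le> a j * S powr (q - 1)"
      using nonneg[OF that] \<open>1 \<le> q\<close> by (intro mult_left_mono powr_mono2) auto
    then show ?thesis
      using nonneg[OF that] by (simp add: powr_mult_base)
  qed
  then have "(\<Sum>j\<in>A. a j powr q) \<le> (\<Sum>j\<in>A. a j * S powr (q - 1))"
    by (rule sum_mono)
  also have "\<dots> = S * S powr (q - 1)"
    unfolding S_def by (rule sum_distrib_right[symmetric])
  also have "\<dots> = S powr q"
    using \<open>S \<ge> 0\<close> by (simp add: powr_mult_base)
  finally show ?thesis
    unfolding S_def .
qed

(* The minorant is nonpositive unless |s - mu| < mu/2, so integrating it
   is Chebyshev's inequality at deviation mu/2. *)
lemma Chebyshev_powr_minorant:
  fixes s \<mu> p :: real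
  assumes "0 \<le> s" "0 < \<mu>" "0 \<le> p"
  shows "(\<mu>/2) powr p * (1 - 4 * (s - \<mu>)^2 / \<mu>^2) \<le> s powr p"
proof (cases "\<mu>/2 \<le> s")
  case True
  have "(\<mu>/2) powr p * (1 - 4 * (s - \<mu>)^2 / \<mu>^2) \<le> (\<mu>/2) powr p"
    by (intro mult_left_le) auto
  also have "\<dots> \<le> s powr p"
    using True assms by (intro powr_mono2) auto
  finally show ?thesis .
next
  case False
  then have "(\<mu>/2)^2 \<le> (\<mu> - s)^2"
    using assms by (intro power_mono) auto
  then have "1 - 4 * (s - \<mu>)^2 / \<mu>^2 \<le> 0"
    using assms by (simp add: field_simps power2_commute[of s])
  then have "(\<mu>/2) powr p * (1 - 4 * (s - \<mu>)^2 / \<mu>^2) \<le> 0"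
    by (simp add: mult_nonneg_nonpos)
  then show ?thesis
    using powr_ge_zero[of s p] by linarith
qed

lemma (in prob_space) integrable_bounded:
  fixes f :: "'a \<Rightarrow> real"
  assumes "f \<in> borel_measurable M" and "\<And>\<omega>. \<omega> \<in> space M \<Longrightarrow> \<bar>f \<omega>\<bar> \<le> C"
  shows "integrable M f"
  using assms by (intro integrable_const_bound[where B = C]) auto

lemma (in prob_space) expectation_square_add_indep:
  fixes X Y :: "'a \<Rightarrow> real"
  assumes indep: "indep_var borel X borel Y"
    and "integrable M X" "integrable M Y"
    and "integrable M (\<lambda>\<omega>. (X \<omega>)^2)" "integrable M (\<lambda>\<omega>. (Y \<omega>)^2)"
  shows "expectation (\<lambda>\<omega>. (X \<omega> + Y \<omega>)^2)
    = expectation (\<lambda>\<omega>. (X \<omega>)^2) + 2 * (expectation X * expectation Y) + expectation (\<lambda>\<omega>. (Y \<omega>)^2)"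
proof -
  have "expectation (\<lambda>\<omega>. (X \<omega> + Y \<omega>)^2)
      = expectation (\<lambda>\<omega>. (X \<omega>)^2 + 2 * (X \<omega> * Y \<omega>) + (Y \<omega>)^2)"
    by (simp add: power2_sum algebra_simps)
  also have "\<dots> = expectation (\<lambda>\<omega>. (X \<omega>)^2) + 2 * expectation (\<lambda>\<omega>. X \<omega> * Y \<omega>)
      + expectation (\<lambda>\<omega>. (Y \<omega>)^2)"
    using assms indep_var_integrable[OF indep assms(2,3)] by simp
  finally show ?thesis
    using indep_var_lebesgue_integral[OF indep assms(2,3)] by simp
qed

lemma (in prob_space) second_moment_sum_le:
  fixes w :: "'i \<Rightarrow> 'a \<Rightarrow> real"
  assumes "finite I" and indep: "indep_vars (\<lambda>_. borel) w I"
    and bounded: "\<And>i \<omega>. i \<in> I \<Longrightarrow> \<omega> \<in> space M \<Longrightarrow> 0 \<le> w i \<omega> \<and> w i \<omega> \<le> B"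
  shows "expectation (\<lambda>\<omega>. (\<Sum>i\<in>I. w i \<omega>)^2)
    \<le> (\<Sum>i\<in>I. expectation (w i))^2 + B * (\<Sum>i\<in>I. expectation (w i))"
  using \<open>finite I\<close> indep bounded
proof (induction I rule: finite_induct)
  case empty
  then show ?case by simp
next
  case (insert i I)
  define S where "S \<omega> = (\<Sum>k\<in>I. w k \<omega>)" for \<omega>
  define e where "e = expectation (w i)"
  define \<mu> where "\<mu> = (\<Sum>k\<in>I. expectation (w k))"
  have [measurable]: "w k \<in> borel_measurable M" if "k \<in> insert i I" for k
    using insert.prems(1) that by (auto simp: indep_vars_def)
  have w_bounds: "0 \<le> w k \<omega> \<and> w k \<omega> \<le> B" if "k \<in> insert i I" "\<omega> \<in> space M" for k \<omega>
    using insert.prems(2)[OF that] .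
  have S_bounds: "0 \<le> S \<omega> \<and> S \<omega> \<le> card I * B" if "\<omega> \<in> space M" for \<omega>
    unfolding S_def using w_bounds that by (auto intro!: sum_bounded_above simp: sum_nonneg)
  have int_w: "integrable M (w k)" if "k \<in> insert i I" for k
    using w_bounds that by (intro integrable_bounded[where C = B]) auto
  have int_w2: "integrable M (\<lambda>\<omega>. (w i \<omega>)^2)"
    using w_bounds by (intro integrable_bounded[where C = "B^2"]) (auto intro: power_mono)
  have int_S: "integrable M S"
    using S_bounds unfolding S_def by (intro integrable_bounded[where C = "card I * B"]) auto
  have int_S2: "integrable M (\<lambda>\<omega>. (S \<omega>)^2)"
    using S_bounds unfolding S_def by (intro integrable_bounded[where C = "(card I * B)^2"]) (auto intro: power_mono)
  have indep_wS: "indep_var borel (w i) borel S"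
    unfolding S_def[abs_def] using insert by (intro indep_vars_sum) auto
  have E_S: "expectation S = \<mu>"
    unfolding S_def \<mu>_def using int_w by (simp add: Bochner_Integration.integral_sum)
  have "expectation (\<lambda>\<omega>. (w i \<omega>)^2) \<le> expectation (\<lambda>\<omega>. B * w i \<omega>)"
    using int_w2 int_w w_bounds by (intro integral_mono) (auto simp: power2_eq_square intro!: mult_right_mono)
  then have E_w2: "expectation (\<lambda>\<omega>. (w i \<omega>)^2) \<le> B * e"
    unfolding e_def by simp
  have E_S2: "expectation (\<lambda>\<omega>. (S \<omega>)^2) \<le> \<mu>^2 + B * \<mu>"
    unfolding S_def \<mu>_def using insert by (intro insert.IH) (auto intro: indep_vars_subset)
  have "expectation (\<lambda>\<omega>. (\<Sum>k\<in>insert i I. w k \<omega>)^2) = expectation (\<lambda>\<omega>. (w i \<omega> + S \<omega>)^2)"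
    using insert.hyps by (simp add: S_def)
  also have "\<dots> = expectation (\<lambda>\<omega>. (w i \<omega>)^2) + 2 * (e * \<mu>) + expectation (\<lambda>\<omega>. (S \<omega>)^2)"
    unfolding e_def E_S[symmetric]
    by (rule expectation_square_add_indep[OF indep_wS int_w int_S int_w2 int_S2]) simp
  also have "\<dots> \<le> B * e + 2 * (e * \<mu>) + (\<mu>^2 + B * \<mu>)"
    using E_w2 E_S2 by simp
  also have "\<dots> \<le> (e + \<mu>)^2 + B * (e + \<mu>)"
    by (simp add: power2_sum algebra_simps)
  finally show ?case
    using insert.hyps by (simp add: e_def \<mu>_def)
qed

lemma (in prob_space) variance_sum_le:
  fixes w :: "'i \<Rightarrow> 'a \<Rightarrow> real"
  assumes "finite I" and indep: "indep_vars (\<lambda>_. borel) w I"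
    and bounded: "\<And>i \<omega>. i \<in> I \<Longrightarrow> \<omega> \<in> space M \<Longrightarrow> 0 \<le> w i \<omega> \<and> w i \<omega> \<le> B"
  shows "variance (\<lambda>\<omega>. \<Sum>i\<in>I. w i \<omega>) \<le> B * (\<Sum>i\<in>I. expectation (w i))"
proof -
  define S where "S \<omega> = (\<Sum>i\<in>I. w i \<omega>)" for \<omega>
  have [measurable]: "w i \<in> borel_measurable M" if "i \<in> I" for i
    using indep that by (auto simp: indep_vars_def)
  have S_bounds: "0 \<le> S \<omega> \<and> S \<omega> \<le> card I * B" if "\<omega> \<in> space M" for \<omega>
    unfolding S_def using bounded that by (auto intro!: sum_bounded_above simp: sum_nonneg)
  have int_w: "integrable M (w i)" if "i \<in> I" for i
    using bounded that by (intro integrable_bounded[where C = B]) auto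
  have int_S: "integrable M S"
    using S_bounds unfolding S_def by (intro integrable_bounded[where C = "card I * B"]) auto
  have int_S2: "integrable M (\<lambda>\<omega>. (S \<omega>)^2)"
    using S_bounds unfolding S_def
    by (intro integrable_bounded[where C = "(card I * B)^2"]) (auto intro: power_mono)
  have "expectation S = (\<Sum>i\<in>I. expectation (w i))"
    unfolding S_def using int_w by (simp add: Bochner_Integration.integral_sum)
  moreover have "expectation (\<lambda>\<omega>. (S \<omega>)^2)
      \<le> (\<Sum>i\<in>I. expectation (w i))^2 + B * (\<Sum>i\<in>I. expectation (w i))"
    unfolding S_def using \<open>finite I\<close> indep bounded by (rule second_moment_sum_le)
  ultimately show ?thesis
    using variance_eq[OF int_S int_S2] unfolding S_def by simp
qed

lemma (in prob_space) Chebyshev_expectation_powr_ge: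
  fixes S :: "'a \<Rightarrow> real"
  assumes [measurable]: "S \<in> borel_measurable M"
    and bounds: "\<And>\<omega>. \<omega> \<in> space M \<Longrightarrow> 0 \<le> S \<omega> \<and> S \<omega> \<le> C"
    and "0 < expectation S" "0 \<le> p"
  shows "(expectation S / 2) powr p * (1 - 4 * variance S / (expectation S)^2)
    \<le> expectation (\<lambda>\<omega>. S \<omega> powr p)"
proof -
  define \<mu> where "\<mu> = expectation S"
  have int_S: "integrable M S"
    using bounds by (intro integrable_bounded[where C = C]) auto
  have int_S2: "integrable M (\<lambda>\<omega>. (S \<omega>)^2)"
    using bounds by (intro integrable_bounded[where C = "C^2"]) (auto intro: power_mono)
  have int_dev: "integrable M (\<lambda>\<omega>. (S \<omega> - \<mu>)^2)"
    using int_S int_S2 by (simp add: power2_diff)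
  have int_powr: "integrable M (\<lambda>\<omega>. S \<omega> powr p)"
    using bounds \<open>0 \<le> p\<close> by (intro integrable_bounded[where C = "C powr p"]) (auto intro: powr_mono2)
  have "(\<mu>/2) powr p * (1 - 4 * variance S / \<mu>^2)
      = expectation (\<lambda>\<omega>. (\<mu>/2) powr p * (1 - 4 * (S \<omega> - \<mu>)^2 / \<mu>^2))"
    using int_dev unfolding \<mu>_def by (simp add: prob_space right_diff_distrib)
  also have "\<dots> \<le> expectation (\<lambda>\<omega>. S \<omega> powr p)"
    using int_dev int_powr bounds assms(3,4) unfolding \<mu>_def
    by (intro integral_mono Chebyshev_powr_minorant) auto
  finally show ?thesis
    unfolding \<mu>_def .
qed

lemma (in prob_space) sum_expectation_le_of_root_moment_le:
  fixes w :: "'i \<Rightarrow> 'a \<Rightarrow> real"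
  assumes "finite I" and indep: "indep_vars (\<lambda>_. borel) w I"
    and bounded: "\<And>i \<omega>. i \<in> I \<Longrightarrow> \<omega> \<in> space M \<Longrightarrow> 0 \<le> w i \<omega> \<and> w i \<omega> \<le> B"
    and "1 \<le> q" "0 < B"
    and root_moment: "expectation (\<lambda>\<omega>. (\<Sum>i\<in>I. w i \<omega>) powr (1/q)) \<le> B powr (1/q)"
  shows "(\<Sum>i\<in>I. expectation (w i)) \<le> (2 powr (q + 1) + 8) * B"
proof (cases "(\<Sum>i\<in>I. expectation (w i)) \<le> 8 * B")
  case True
  have "0 \<le> 2 powr (q + 1) * B"
    using \<open>0 < B\<close> by simp
  with True show ?thesis
    by (simp add: distrib_right)
next
  case False
  define S where "S \<omega> = (\<Sum>i\<in>I. w i \<omega>)" for \<omega>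
  define \<mu> where "\<mu> = (\<Sum>i\<in>I. expectation (w i))"
  define c where "c = (\<mu>/2) powr (1/q)"
  have "0 < \<mu>"
    using False \<open>0 < B\<close> unfolding \<mu>_def by simp
  have [measurable]: "w i \<in> borel_measurable M" if "i \<in> I" for i
    using indep that by (auto simp: indep_vars_def)
  have [measurable]: "S \<in> borel_measurable M"
    unfolding S_def by measurable
  have S_bounds: "0 \<le> S \<omega> \<and> S \<omega> \<le> card I * B" if "\<omega> \<in> space M" for \<omega>
    unfolding S_def using bounded that by (auto intro!: sum_bounded_above simp: sum_nonneg)
  have E_S: "expectation S = \<mu>"
    unfolding S_def \<mu>_def using bounded
    by (intro Bochner_Integration.integral_sum integrable_bounded[where C = B]) auto
  have "c * (1 - 4 * variance S / \<mu>^2) \<le> expectation (\<lambda>\<omega>. S \<omega> powr (1/q))"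
    unfolding c_def E_S[symmetric]
    by (rule Chebyshev_expectation_powr_ge[where C = "card I * B"])
      (use S_bounds E_S \<open>0 < \<mu>\<close> \<open>1 \<le> q\<close> in auto)
  also have "\<dots> \<le> B powr (1/q)"
    using root_moment unfolding S_def .
  finally have "c * (1 - 4 * variance S / \<mu>^2) \<le> B powr (1/q)" .
  moreover have "4 * variance S / \<mu>^2 \<le> 1/2"
  proof -
    have "variance S \<le> B * \<mu>"
      unfolding S_def \<mu>_def using \<open>finite I\<close> indep bounded by (rule variance_sum_le)
    moreover have "8 * B * \<mu> < \<mu> * \<mu>"
      using False \<open>0 < \<mu>\<close> unfolding \<mu>_def by (intro mult_strict_right_mono) auto
    ultimately have "8 * variance S < \<mu> * \<mu>"
      by linarith
    then show ?thesis
      using \<open>0 < \<mu>\<close> by (simp add: field_simps power2_eq_square)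
  qed
  then have "c * (1/2) \<le> c * (1 - 4 * variance S / \<mu>^2)"
    unfolding c_def by (intro mult_left_mono) auto
  ultimately have "c \<le> 2 * B powr (1/q)"
    by linarith
  then have "c powr q \<le> (2 * B powr (1/q)) powr q"
    using \<open>1 \<le> q\<close> unfolding c_def by (intro powr_mono2) auto
  then have "\<mu>/2 \<le> 2 powr q * B"
    using \<open>0 < \<mu>\<close> \<open>0 < B\<close> \<open>1 \<le> q\<close> unfolding c_def by (simp add: powr_mult powr_powr)
  then show ?thesis
    unfolding \<mu>_def using \<open>0 < B\<close> by (simp add: powr_add algebra_simps)
qed

lemma (in prob_space) sum_nn_integral_le_of_root_moment_le:
  fixes w :: "'i \<Rightarrow> 'a \<Rightarrow> real"
  assumes "finite I" and indep: "indep_vars (\<lambda>_. borel) w I"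
    and bounded: "\<And>i \<omega>. i \<in> I \<Longrightarrow> \<omega> \<in> space M \<Longrightarrow> 0 \<le> w i \<omega> \<and> w i \<omega> \<le> B"
    and "1 \<le> q" "0 < B"
    and root_moment: "(\<integral>\<^sup>+\<omega>. ennreal ((\<Sum>i\<in>I. w i \<omega>) powr (1/q)) \<partial>M) \<le> ennreal (B powr (1/q))"
  shows "(\<Sum>i\<in>I. \<integral>\<^sup>+\<omega>. ennreal (w i \<omega>) \<partial>M) \<le> ennreal ((2 powr (q + 1) + 8) * B)"
proof -
  have [measurable]: "w i \<in> borel_measurable M" if "i \<in> I" for i
    using indep that by (auto simp: indep_vars_def)
  have int_w: "integrable M (w i)" if "i \<in> I" for i
    using bounded that by (intro integrable_bounded[where C = B]) auto
  have "integrable M (\<lambda>\<omega>. (\<Sum>i\<in>I. w i \<omega>) powr (1/q))"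
    using bounded \<open>1 \<le> q\<close>
    by (intro integrable_bounded[where C = "(card I * B) powr (1/q)"])
      (auto intro!: powr_mono2 sum_bounded_above sum_nonneg)
  then have "ennreal (expectation (\<lambda>\<omega>. (\<Sum>i\<in>I. w i \<omega>) powr (1/q))) \<le> ennreal (B powr (1/q))"
    using root_moment by (subst nn_integral_eq_integral[symmetric]) auto
  then have "expectation (\<lambda>\<omega>. (\<Sum>i\<in>I. w i \<omega>) powr (1/q)) \<le> B powr (1/q)"
    by (simp add: ennreal_le_iff)
  with assms(1-5) have "(\<Sum>i\<in>I. expectation (w i)) \<le> (2 powr (q + 1) + 8) * B"
    by (rule sum_expectation_le_of_root_moment_le)
  moreover have "(\<Sum>i\<in>I. \<integral>\<^sup>+\<omega>. ennreal (w i \<omega>) \<partial>M) = ennreal (\<Sum>i\<in>I. expectation (w i))"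
    using int_w bounded by (simp add: nn_integral_eq_integral integral_nonneg_AE sum_ennreal)
  ultimately show ?thesis
    by (simp add: ennreal_leI)
qed

lemma machine_of_assignment:
  assumes "is_assignment m n J" "j \<in> {1..n}"
  shows "machine_of m J j \<in> {1..m}" "j \<in> J (machine_of m J j)"
proof -
  have "\<exists>!i. i \<in> {1..m} \<and> j \<in> J i"
    using assms unfolding is_assignment_def by auto
  from theI'[OF this] show "machine_of m J j \<in> {1..m}" "j \<in> J (machine_of m J j)"
    unfolding machine_of_def by auto
qed

lemma machine_of_eqI:
  assumes "is_assignment m n J" "i \<in> {1..m}" "j \<in> J i"
  shows "machine_of m J j = i"
proof -
  have "j \<in> {1..n}"
    using assms unfolding is_assignment_def by blast
  then have "\<exists>!i. i \<in> {1..m} \<and> j \<in> J i"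
    using assms unfolding is_assignment_def by auto
  then show ?thesis
    unfolding machine_of_def using assms by (auto intro: the1_equality)
qed

lemma finite_assignment_part:
  assumes "is_assignment m n J" "i \<in> {1..m}"
  shows "finite (J i)"
  using assms unfolding is_assignment_def by (meson finite_atLeastAtMost finite_subset)

lemma sum_over_assignment:
  assumes "is_assignment m n J"
  shows "(\<Sum>j\<in>{1..n}. g j) = (\<Sum>i\<in>{1..m}. \<Sum>j\<in>J i. g j)"
proof -
  have "{1..n} = (\<Union>i\<in>{1..m}. J i)"
    using assms machine_of_assignment[OF assms] unfolding is_assignment_def by blast
  moreover have "finite (J i)" if "i \<in> {1..m}" for i
    using assms that by (rule finite_assignment_part)
  moreover have "J i \<inter> J k = {}" if "i \<in> {1..m}" "k \<in> {1..m}" "i \<noteq> k" for i k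
    using machine_of_eqI[OF assms] that by blast
  ultimately show ?thesis
    by (simp add: sum.UNION_disjoint)
qed

lemma (in prob_space) indep_vars_Yv:
  assumes "is_assignment m n J"
    and "indep_vars (\<lambda>j. Pi\<^sub>M {1..m} (\<lambda>_. borel)) (\<lambda>j \<omega>. \<lambda>i\<in>{1..m}. X i j \<omega>) {1..n}"
  shows "indep_vars (\<lambda>_. borel) (Yv X m J) {1..n}"
proof -
  have "(\<lambda>v. v (machine_of m J j)) \<in> Pi\<^sub>M {1..m} (\<lambda>_. borel) \<rightarrow>\<^sub>M borel" if "j \<in> {1..n}" for j
    using machine_of_assignment(1)[OF assms(1) that] by (rule measurable_component_singleton)
  from indep_vars_compose2[OF assms(2) this]
  have "indep_vars (\<lambda>_. borel) (\<lambda>j \<omega>. (\<lambda>i\<in>{1..m}. X i j \<omega>) (machine_of m J j)) {1..n}" .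
  moreover have "(\<lambda>\<omega>. (\<lambda>i\<in>{1..m}. X i j \<omega>) (machine_of m J j)) = Yv X m J j" if "j \<in> {1..n}" for j
    using machine_of_assignment(1)[OF assms(1) that] by (simp add: Yv_def fun_eq_iff)
  ultimately show ?thesis
    by (subst (asm) indep_vars_cong[OF refl _ refl]) auto
qed

lemma sum_Ytr_powr_le_sum_loads_powr:
  assumes "is_assignment m n J" "1 \<le> q" and nonneg: "\<And>j. j \<in> {1..n} \<Longrightarrow> 0 \<le> Yv X m J j \<omega>"
  shows "(\<Sum>j\<in>{1..n}. Ytr X m J M j \<omega> powr q) \<le> (\<Sum>i\<in>{1..m}. (\<Sum>j\<in>J i. Yv X m J j \<omega>) powr q)"
proof -
  have "(\<Sum>j\<in>{1..n}. Ytr X m J M j \<omega> powr q) \<le> (\<Sum>j\<in>{1..n}. Yv X m J j \<omega> powr q)"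
    using nonneg \<open>1 \<le> q\<close> by (intro sum_mono powr_mono2) (auto simp: Ytr_def)
  also have "\<dots> = (\<Sum>i\<in>{1..m}. \<Sum>j\<in>J i. Yv X m J j \<omega> powr q)"
    using assms(1) by (rule sum_over_assignment)
  also have "\<dots> \<le> (\<Sum>i\<in>{1..m}. (\<Sum>j\<in>J i. Yv X m J j \<omega>) powr q)"
  proof (intro sum_mono sum_powr_le_powr_sum)
    fix i j assume "i \<in> {1..m}" "j \<in> J i"
    then show "0 \<le> Yv X m J j \<omega>"
      using assms(1) nonneg unfolding is_assignment_def by blast
  qed (use finite_assignment_part[OF assms(1)] \<open>1 \<le> q\<close> in auto)
  finally show ?thesis .
qed

theorem mainTheorem13:
  fixes P :: "'a measure"
    and X :: "nat \<Rightarrow> nat \<Rightarrow> 'a \<Rightarrow> real"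
    and m n :: nat and J :: "nat \<Rightarrow> nat set" and q M :: real
  assumes "prob_space P"
    and meas: "\<And>i j. i \<in> {1..m} \<Longrightarrow> j \<in> {1..n} \<Longrightarrow> X i j \<in> borel_measurable P"
    and nonneg: "\<And>i j \<omega>. i \<in> {1..m} \<Longrightarrow> j \<in> {1..n} \<Longrightarrow> \<omega> \<in> space P \<Longrightarrow> X i j \<omega> \<ge> 0"
    and indep: "prob_space.indep_vars P (\<lambda>j. Pi\<^sub>M {1..m} (\<lambda>_. borel))
                  (\<lambda>j \<omega>. \<lambda>i\<in>{1..m}. X i j \<omega>) {1..n}"
    and q: "q \<ge> 1" and Mpos: "M > 0"
    and asg: "is_assignment m n J"
    and bound: "(\<integral>\<^sup>+ \<omega>. ennreal ((\<Sum>i\<in>{1..m}. (\<Sum>j\<in>J i. Yv X m J j \<omega>) powr q) powr (1 / q)) \<partial>P)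
                  \<le> ennreal M"
  shows "(\<Sum>j\<in>{1..n}. \<integral>\<^sup>+ \<omega>. ennreal (Ytr X m J M j \<omega> powr q) \<partial>P)
           \<le> ennreal ((2 powr (q + 1) + 8) * M powr q)"
proof -
  interpret prob_space P by fact
  have Yv_nonneg: "0 \<le> Yv X m J j \<omega>" if "j \<in> {1..n}" "\<omega> \<in> space P" for j \<omega>
    using nonneg machine_of_assignment[OF asg that(1)] that by (simp add: Yv_def)
  have indep_Ytr: "indep_vars (\<lambda>_. borel) (\<lambda>j \<omega>. Ytr X m J M j \<omega> powr q) {1..n}"
    unfolding Ytr_def
    by (rule indep_vars_compose2[where Y = "\<lambda>_ y. (if y \<le> M then y else 0) powr q",
          OF indep_vars_Yv[OF asg indep]]) measurable
  have "0 < M powr q"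
    using Mpos by simp
  have bounded_Ytr: "0 \<le> Ytr X m J M j \<omega> powr q \<and> Ytr X m J M j \<omega> powr q \<le> M powr q"
    if "j \<in> {1..n}" "\<omega> \<in> space P" for j \<omega>
    using Yv_nonneg[OF that] q Mpos by (simp add: Ytr_def powr_mono2)
  have root_moment: "(\<integral>\<^sup>+\<omega>. ennreal ((\<Sum>j\<in>{1..n}. Ytr X m J M j \<omega> powr q) powr (1/q)) \<partial>P)
      \<le> ennreal ((M powr q) powr (1/q))"
  proof -
    have "(\<integral>\<^sup>+\<omega>. ennreal ((\<Sum>j\<in>{1..n}. Ytr X m J M j \<omega> powr q) powr (1/q)) \<partial>P)
        \<le> (\<integral>\<^sup>+ \<omega>. ennreal ((\<Sum>i\<in>{1..m}. (\<Sum>j\<in>J i. Yv X m J j \<omega>) powr q) powr (1 / q)) \<partial>P)"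
      using Yv_nonneg bounded_Ytr q
      by (intro nn_integral_mono ennreal_leI powr_mono2 sum_Ytr_powr_le_sum_loads_powr[OF asg] sum_nonneg)
        auto
    also have "\<dots> \<le> ennreal ((M powr q) powr (1/q))"
      using bound Mpos q by (simp add: powr_powr)
    finally show ?thesis .
  qed
  show ?thesis
    by (rule sum_nn_integral_le_of_root_moment_le[OF finite_atLeastAtMost indep_Ytr _ q
          \<open>0 < M powr q\<close> root_moment]) (rule bounded_Ytr)
qed

end
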